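(* Let $f:\{-1,1\}^n\to\{-1,1\}$ be a boolean function, $V_1\subsetneq[n]$, $k\in[n]\setminus V_1$, $V_2=V_1\cup\{k\}$, $\epsilon\in(0,\tfrac12)$, and suppose $I_k(f)>0$. For $x\in\{-1,1\}^n$ and $S\subseteq V_1$ set $a_{x,S}=\min\{\widehat{f_{V_2^c\to x}}(S)^2,\widehat{f_{V_2^c\to x}}(S\cup\{k\})^2\}$ and $b_{x,S}=\max\{\widehat{f_{V_2^c\to x}}(S)^2,\widehat{f_{V_2^c\to x}}(S\cup\{k\})^2\}$. Then $$\mathbb{E}_x\sum_{S\subseteq V_1}(b_{x,S}^\epsilon-a_{x,S}^\epsilon)\,a_{x,S}\le I_k(f)\Big(\Big(\frac{I_k(f)}{4}\Big)^{-\epsilon}-1\Big),$$ with $x$ uniform on $\{-1,1\}^n$ and the convention $0^\epsilon\cdot 0=0$.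
   Context: $\mu_k$ flips the $k$-th coordinate; $I_k(f)=\mathbb{P}_x[f(x)\neq f(\mu_k(x))]$. For $J\subseteq[n]$ and $x\in\{-1,1\}^n$, the restriction $f_{J^c\to x}:\{-1,1\}^J\to\{-1,1\}$ is $f_{J^c\to x}(y)=f(z)$ with $z_i=y_i$ for $i\in J$ and $z_i=x_i$ for $i\notin J$; $\widehat{f_{J^c\to x}}(S)=\mathbb{E}_y[f_{J^c\to x}(y)\prod_{i\in S}y_i]$ for $S\subseteq J$, $y$ uniform on $\{-1,1\}^J$. *)

theory Defs
  imports Complex_Main "HOL-Library.FuncSet"
begin

text \<open>Coordinates are indexed by {0..<n} (standing for [n]). A point of the cube
  {-1,1}^J is a function in PiE J (\<lambda>_. {-1,1}) (value undefined off J).\<close>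

definition cube :: "nat set \<Rightarrow> (nat \<Rightarrow> real) set" where
  "cube J = PiE J (\<lambda>_. {-1, 1})"

definition flip :: "nat \<Rightarrow> (nat \<Rightarrow> real) \<Rightarrow> (nat \<Rightarrow> real)" where
  "flip k x = x(k := - x k)"

definition is_boolean :: "nat \<Rightarrow> ((nat \<Rightarrow> real) \<Rightarrow> real) \<Rightarrow> bool" where
  "is_boolean n f \<longleftrightarrow> (\<forall>x\<in>cube {0..<n}. f x = -1 \<or> f x = 1)"

definition influence :: "nat \<Rightarrow> ((nat \<Rightarrow> real) \<Rightarrow> real) \<Rightarrow> nat \<Rightarrow> real" where
  "influence n f k = real (card {x \<in> cube {0..<n}. f x \<noteq> f (flip k x)}) / 2 ^ n"

definition glue :: "nat set \<Rightarrow> (nat \<Rightarrow> real) \<Rightarrow> (nat \<Rightarrow> real) \<Rightarrow> (nat \<Rightarrow> real)" where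
  "glue J y x = (\<lambda>i. if i \<in> J then y i else x i)"

text \<open>Fourier coefficient of the restriction f_{J^c -> x} at S \<subseteq> J.\<close>
definition restr_coeff ::
  "((nat \<Rightarrow> real) \<Rightarrow> real) \<Rightarrow> nat set \<Rightarrow> (nat \<Rightarrow> real) \<Rightarrow> nat set \<Rightarrow> real" where
  "restr_coeff f J x S =
     (\<Sum>y\<in>cube J. f (glue J y x) * (\<Prod>i\<in>S. y i)) / 2 ^ card J"

end

theory Submission imports Defs "HOL-Analysis.Analysis" begin

text \<open>For fixed x, write a, b for the smaller and larger of the two squared coefficients at S and
  S \<union> {k} of the restriction to V2. Since |c(S)| + |c(S \<union> {k})| \<le> 1, one has a \<le> 1/4, hence
  (b^\<epsilon> - a^\<epsilon>) a \<le> 4^-\<epsilon> (a^(1-\<epsilon>) b^\<epsilon> - a). By Hoelder the averaged right-hand side is at most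
  4^-\<epsilon> (A^(1-\<epsilon>) B^\<epsilon> - A), where A and B are the averages of the sums of a and b. Parseval gives
  B \<le> 1, and since the coefficients at S \<union> {k} are those of the derivative (f - f \<circ> \<mu>_k)/2,
  Parseval for the derivative gives A \<le> I_k(f). An elementary inequality in one variable
  finishes the proof.\<close>

section \<open>Elementary real inequalities\<close>

lemma Youngs_inequality_0_nonneg:
  fixes a b :: real
  assumes "0 \<le> \<alpha>" "0 \<le> \<beta>" "\<alpha> + \<beta> = 1" "0 \<le> a" "0 \<le> b"
  shows "a powr \<alpha> * b powr \<beta> \<le> \<alpha> * a + \<beta> * b"
  using assms Youngs_inequality_0[OF assms(1-3)]
  by (cases "a = 0 \<or> b = 0") auto

lemma sum_powr_Holder:
  fixes a b :: "'a \<Rightarrow> real"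
  assumes "finite P" "\<And>p. p \<in> P \<Longrightarrow> 0 \<le> a p" "\<And>p. p \<in> P \<Longrightarrow> 0 \<le> b p"
    and "0 \<le> e" "e \<le> 1"
  shows "(\<Sum>p\<in>P. a p powr (1-e) * b p powr e) \<le> (\<Sum>p\<in>P. a p) powr (1-e) * (\<Sum>p\<in>P. b p) powr e"
proof (cases "(\<Sum>p\<in>P. a p) = 0 \<or> (\<Sum>p\<in>P. b p) = 0")
  case True
  then have "\<forall>p\<in>P. a p = 0 \<or> b p = 0"
    using assms by (auto simp: sum_nonneg_eq_0_iff)
  then show ?thesis by (simp add: sum.neutral)
next
  case False
  define A B where "A = (\<Sum>p\<in>P. a p)" and "B = (\<Sum>p\<in>P. b p)"
  have "0 \<le> A" "0 \<le> B"
    using assms by (auto simp: A_def B_def intro: sum_nonneg)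
  then have A: "0 < A" and B: "0 < B"
    using False by (auto simp: A_def B_def)
  have "(\<Sum>p\<in>P. a p powr (1-e) * b p powr e)
      = (\<Sum>p\<in>P. A powr (1-e) * B powr e * ((a p / A) powr (1-e) * (b p / B) powr e))"
    using A B assms by (intro sum.cong refl) (simp add: powr_divide field_simps)
  also have "\<dots> \<le> (\<Sum>p\<in>P. A powr (1-e) * B powr e * ((1-e) * (a p / A) + e * (b p / B)))"
    using A B assms by (intro sum_mono mult_left_mono Youngs_inequality_0_nonneg) auto
  also have "\<dots> = A powr (1-e) * B powr e * ((1-e) * ((\<Sum>p\<in>P. a p) / A) + e * ((\<Sum>p\<in>P. b p) / B))"
    by (simp add: sum.distrib flip: sum_distrib_left sum_divide_distrib)
  also have "\<dots> = A powr (1-e) * B powr e"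
    using A B by (simp flip: A_def B_def)
  finally show ?thesis by (simp add: A_def B_def)
qed

lemma one_plus_le_four_powr:
  assumes "0 \<le> e"
  shows "1 + e \<le> (4::real) powr e"
proof -
  have "1 \<le> ln (4::real)"
    using exp_le by (subst ln_ge_iff) auto
  then have "e \<le> e * ln 4"
    using assms by (simp add: mult_le_cancel_left1)
  also have "1 + e * ln 4 \<le> exp (e * ln 4)"
    by (rule exp_ge_add_one_self)
  finally show ?thesis by (simp add: powr_def mult.commute)
qed

lemma powr_gap_mult_le:
  fixes a b e :: real
  assumes "0 \<le> a" "a \<le> b" "a \<le> 1/4" "0 < e"
  shows "(b powr e - a powr e) * a \<le> 4 powr (-e) * (a powr (1-e) * b powr e - a)"
proof (cases "a = 0")
  case False
  then have a: "0 < a" using assms by simp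
  have split: "a powr e * a powr (1-e) = a"
    using a by (simp add: powr_add[symmetric])
  have "(b powr e - a powr e) * a = a powr e * (a powr (1-e) * b powr e - a)"
    using split by (simp add: algebra_simps powr_add[symmetric])
  also have "\<dots> \<le> 4 powr (-e) * (a powr (1-e) * b powr e - a)"
  proof (rule mult_right_mono)
    have "a powr e \<le> (1/4) powr e"
      using assms a by (intro powr_mono2) auto
    then show "a powr e \<le> 4 powr (-e)"
      by (simp add: powr_divide powr_minus_divide)
    have "a powr (1-e) * a powr e \<le> a powr (1-e) * b powr e"
      using assms a by (intro mult_left_mono powr_mono2) auto
    then show "0 \<le> a powr (1-e) * b powr e - a"
      using split by (simp add: mult.commute)
  qed
  finally show ?thesis .
qed simp

lemma powr_gap_le_influence_bound:
  fixes A I e :: real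
  assumes A: "0 \<le> A" "A \<le> I" and I: "I \<le> 1" "0 < I" and e: "0 < e" "e < 1"
  shows "4 powr (-e) * (A powr (1-e) - A) \<le> I * ((I/4) powr (-e) - 1)"
proof -
  define u q where "u = (4::real) powr e" and "q = I powr e"
  have u: "1 + e \<le> u" and q: "0 < q" "q \<le> 1"
    using one_plus_le_four_powr e I by (auto simp: u_def q_def intro: powr_le1)
  have "I \<le> I / q"
    using I q by (simp add: le_divide_eq)
  have lhs: "4 powr (-e) * (A powr (1-e) - A) = (A powr (1-e) - A) / u"
    by (simp add: u_def powr_minus divide_inverse)
  have rhs: "I * ((I/4) powr (-e) - 1) = u * (I / q) - I"
    using I by (simp add: u_def q_def powr_divide powr_minus field_simps)
  \<comment> \<open>Young bounds A^(1-e) - A by an affine function of A, which is maximal at A = 0 or at A = I.\<close>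
  have "A powr (1-e) * q \<le> (1-e) * A + e * I"
    using Youngs_inequality_0_nonneg[of "1-e" e A I] A I e by (simp add: q_def)
  then have affine: "A powr (1-e) - A \<le> e * (I/q) + A * ((1-e)/q - 1)"
    using q by (simp add: field_simps)
  have "A powr (1-e) - A \<le> e * (I/q) \<or> A powr (1-e) - A \<le> I/q - I"
  proof (cases "(1-e)/q - 1 \<ge> 0")
    case True
    then have "A * ((1-e)/q - 1) \<le> I * ((1-e)/q - 1)"
      using A by (intro mult_right_mono)
    moreover have "e * (I/q) + I * ((1-e)/q - 1) = I/q - I"
      using q by (simp add: field_simps)
    ultimately show ?thesis using affine by linarith
  next
    case False
    then have "A * ((1-e)/q - 1) \<le> 0"
      using A by (intro mult_nonneg_nonpos) auto
    then show ?thesis using affine by linarith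
  qed
  moreover have "e * (I/q) / u \<le> u * (I/q) - I"
  proof -
    have "e / u \<le> e"
      using u e by (simp add: field_simps)
    then have "1 * I \<le> (u - e/u) * (I/q)"
      using u \<open>I \<le> I/q\<close> I by (intro mult_mono) auto
    then show ?thesis by (simp add: algebra_simps)
  qed
  moreover have "(I/q - I) / u \<le> u * (I/q) - I"
  proof -
    have "1/u \<le> 1"
      using u e by simp
    then have "1/u \<le> u"
      using u e by linarith
    then have "(1 - 1/u) * I \<le> (u - 1/u) * (I/q)"
      using u e \<open>I \<le> I/q\<close> I by (intro mult_mono) auto
    moreover have "(I/q - I) / u = u * (I/q) - I - ((u - 1/u) * (I/q) - (1 - 1/u) * I)"
      by (simp add: algebra_simps diff_divide_distrib)
    ultimately show ?thesis by linarith
  qed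
  moreover have "0 \<le> u"
    using u e by linarith
  ultimately have "(A powr (1-e) - A) / u \<le> u * (I/q) - I"
    by (meson divide_right_mono order_trans)
  then show ?thesis using lhs rhs by simp
qed

lemma min_sq_le_quarter:
  fixes u v :: real
  assumes "\<bar>u\<bar> + \<bar>v\<bar> \<le> 1"
  shows "min (u\<^sup>2) (v\<^sup>2) \<le> 1/4"
proof -
  have "\<bar>u\<bar> \<le> \<bar>1/2\<bar> \<or> \<bar>v\<bar> \<le> \<bar>1/2\<bar>"
    using assms by linarith
  then have "u\<^sup>2 \<le> (1/2)\<^sup>2 \<or> v\<^sup>2 \<le> (1/2)\<^sup>2"
    by (simp only: abs_le_square_iff)
  then show ?thesis by (auto simp: power2_eq_square)
qed

lemma sum_powr_gap_le:
  fixes a b :: "'a \<Rightarrow> real"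
  assumes P: "finite P"
    and ab: "\<And>p. p \<in> P \<Longrightarrow> 0 \<le> a p \<and> a p \<le> b p \<and> a p \<le> 1/4"
    and sum_b: "(\<Sum>p\<in>P. b p) \<le> M" and sum_a: "(\<Sum>p\<in>P. a p) \<le> M * I"
    and M: "0 < M" and I: "0 < I" "I \<le> 1" and e: "0 < e" "e < 1"
  shows "(\<Sum>p\<in>P. (b p powr e - a p powr e) * a p) \<le> M * (I * ((I/4) powr (-e) - 1))"
proof -
  define SA where "SA = (\<Sum>p\<in>P. a p)"
  have SA: "0 \<le> SA" "SA / M \<le> I"
    using ab sum_a M by (auto simp: SA_def sum_nonneg divide_le_eq mult.commute)
  have "(\<Sum>p\<in>P. (b p powr e - a p powr e) * a p)
      \<le> (\<Sum>p\<in>P. 4 powr (-e) * (a p powr (1-e) * b p powr e - a p))"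
    using ab e by (intro sum_mono powr_gap_mult_le) auto
  also have "\<dots> = 4 powr (-e) * ((\<Sum>p\<in>P. a p powr (1-e) * b p powr e) - SA)"
    by (simp add: SA_def sum_distrib_left sum_subtractf right_diff_distrib)
  also have "\<dots> \<le> 4 powr (-e) * (SA powr (1-e) * M powr e - SA)"
  proof -
    have "(\<Sum>p\<in>P. a p powr (1-e) * b p powr e) \<le> SA powr (1-e) * (\<Sum>p\<in>P. b p) powr e"
      unfolding SA_def using ab e by (intro sum_powr_Holder[OF P]) force+
    also have "\<dots> \<le> SA powr (1-e) * M powr e"
      using ab e sum_b by (intro mult_left_mono powr_mono2) (auto intro: sum_nonneg order_trans)
    finally show ?thesis by simp
  qed
  also have "\<dots> = M * (4 powr (-e) * ((SA / M) powr (1-e) - SA / M))"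
    using M SA by (simp add: powr_divide powr_diff field_simps)
  also have "\<dots> \<le> M * (I * ((I/4) powr (-e) - 1))"
    using SA M I e by (intro mult_left_mono powr_gap_le_influence_bound) auto
  finally show ?thesis .
qed

section \<open>Fourier analysis on a subcube\<close>

definition walsh :: "nat set \<Rightarrow> (nat \<Rightarrow> real) \<Rightarrow> real" where
  "walsh T y = (\<Prod>i\<in>T. y i)"

definition fourier_coeff :: "nat set \<Rightarrow> ((nat \<Rightarrow> real) \<Rightarrow> real) \<Rightarrow> nat set \<Rightarrow> real" where
  "fourier_coeff J G T = (\<Sum>y\<in>cube J. G y * walsh T y) / 2 ^ card J"

lemma finite_cube: "finite J \<Longrightarrow> finite (cube J)"
  unfolding cube_def by (simp add: finite_PiE)

lemma card_cube: "finite J \<Longrightarrow> card (cube J) = 2 ^ card J"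
  unfolding cube_def by (simp add: card_PiE numeral_2_eq_2)

lemma cube_coord: "y \<in> cube J \<Longrightarrow> i \<in> J \<Longrightarrow> y i = -1 \<or> y i = 1"
  unfolding cube_def by auto

lemma cube_coord_sq: "y \<in> cube J \<Longrightarrow> i \<in> J \<Longrightarrow> y i * y i = 1"
  using cube_coord by fastforce

lemma walsh_sq:
  assumes "y \<in> cube J" "T \<subseteq> J"
  shows "walsh T y * walsh T y = 1"
proof -
  have "walsh T y * walsh T y = (\<Prod>i\<in>T. y i * y i)"
    unfolding walsh_def by (simp add: prod.distrib)
  also have "\<dots> = 1"
    using cube_coord_sq[OF assms(1)] assms(2) by (intro prod.neutral) auto
  finally show ?thesis .
qed

lemma abs_walsh: "y \<in> cube J \<Longrightarrow> T \<subseteq> J \<Longrightarrow> \<bar>walsh T y\<bar> = 1"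
  using walsh_sq by (metis abs_1 abs_minus_cancel square_eq_1_iff)

lemma walsh_insert: "finite S \<Longrightarrow> k \<notin> S \<Longrightarrow> walsh (insert k S) y = y k * walsh S y"
  unfolding walsh_def by simp

lemma sum_walsh_orthogonality:
  assumes J: "finite J" and y: "y \<in> cube J" and z: "z \<in> cube J"
  shows "(\<Sum>T\<in>Pow J. walsh T y * walsh T z) = (if y = z then 2 ^ card J else 0)"
proof -
  have "(\<Sum>T\<in>Pow J. walsh T y * walsh T z) = (\<Sum>T\<in>Pow J. (\<Prod>i\<in>T. y i * z i) * (\<Prod>i\<in>J-T. 1))"
    unfolding walsh_def by (simp add: prod.distrib)
  also have "\<dots> = (\<Prod>i\<in>J. y i * z i + 1)"
    using prod_add[OF J, of "\<lambda>i. y i * z i" "\<lambda>i. 1"] by simp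
  also have "\<dots> = (if y = z then 2 ^ card J else 0)"
  proof (cases "y = z")
    case True
    then have "(\<Prod>i\<in>J. y i * z i + 1) = (\<Prod>i\<in>J. 2)"
      using cube_coord_sq[OF y] by (intro prod.cong) auto
    then show ?thesis using True by simp
  next
    case False
    then obtain i where i: "i \<in> J" "y i \<noteq> z i"
      using y z unfolding cube_def by (metis PiE_ext)
    then have "y i * z i + 1 = 0"
      using cube_coord[OF y i(1)] cube_coord[OF z i(1)] by auto
    then have "(\<Prod>i\<in>J. y i * z i + 1) = 0"
      using i J by (meson prod_zero)
    then show ?thesis using False by simp
  qed
  finally show ?thesis .
qed

lemma Parseval:
  assumes J: "finite J"
  shows "(\<Sum>T\<in>Pow J. (fourier_coeff J G T)\<^sup>2) = (\<Sum>y\<in>cube J. (G y)\<^sup>2) / 2 ^ card J"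
proof -
  let ?c = "(2::real) ^ card J"
  have "(\<Sum>T\<in>Pow J. (fourier_coeff J G T)\<^sup>2)
      = (\<Sum>T\<in>Pow J. (\<Sum>y\<in>cube J. \<Sum>z\<in>cube J. G y * G z * (walsh T y * walsh T z)) / ?c\<^sup>2)"
    unfolding fourier_coeff_def power2_eq_square
    by (intro sum.cong refl) (simp add: sum_product algebra_simps)
  also have "\<dots> = (\<Sum>y\<in>cube J. \<Sum>z\<in>cube J. G y * G z * (\<Sum>T\<in>Pow J. walsh T y * walsh T z)) / ?c\<^sup>2"
    by (simp add: sum_divide_distrib[symmetric] sum_distrib_left sum.swap[of _ "Pow J"])
  also have "\<dots> = (\<Sum>y\<in>cube J. \<Sum>z\<in>cube J. if y = z then G y * G z * ?c else 0) / ?c\<^sup>2"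
    using sum_walsh_orthogonality[OF J] by (intro arg_cong[where f="\<lambda>t. t / _"] sum.cong refl) auto
  also have "\<dots> = (\<Sum>y\<in>cube J. (G y)\<^sup>2) / ?c"
    using finite_cube[OF J] by (simp add: power2_eq_square flip: sum_distrib_right)
  finally show ?thesis .
qed

lemma flip_flip [simp]: "flip k (flip k y) = y"
  unfolding flip_def by auto

lemma flip_in_cube: "k \<in> J \<Longrightarrow> y \<in> cube J \<Longrightarrow> flip k y \<in> cube J"
  unfolding flip_def cube_def by (auto simp: PiE_iff extensional_def)

lemma sum_cube_flip:
  assumes "k \<in> J"
  shows "(\<Sum>y\<in>cube J. F (flip k y)) = (\<Sum>y\<in>cube J. F y)"
  by (rule sum.reindex_bij_witness[of _ "flip k" "flip k"]) (use assms flip_in_cube in auto)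

lemma walsh_flip:
  assumes "finite T" "k \<in> T"
  shows "walsh T (flip k y) = - walsh T y"
proof -
  have "(\<Prod>i\<in>T-{k}. flip k y i) = (\<Prod>i\<in>T-{k}. y i)"
    by (intro prod.cong) (auto simp: flip_def)
  then show ?thesis
    using assms by (simp add: walsh_def prod.remove flip_def)
qed

lemma sum_cube_coord: "k \<in> J \<Longrightarrow> (\<Sum>y\<in>cube J. y k) = 0"
  using sum_cube_flip[of k J "\<lambda>y. y k"] by (simp add: flip_def sum_negf)

lemma fourier_coeff_derivative:
  assumes J: "finite J" and T: "T \<subseteq> J" "k \<in> T"
  shows "fourier_coeff J (\<lambda>y. (G y - G (flip k y)) / 2) T = fourier_coeff J G T"
proof -
  have fT: "finite T" using J T finite_subset by blast
  have "(\<Sum>y\<in>cube J. G (flip k y) * walsh T y) = (\<Sum>y\<in>cube J. G y * walsh T (flip k y))"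
    using sum_cube_flip[of k J "\<lambda>y. G y * walsh T (flip k y)"] T by auto
  also have "\<dots> = - (\<Sum>y\<in>cube J. G y * walsh T y)"
    using walsh_flip[OF fT T(2)] by (simp add: sum_negf)
  finally have "(\<Sum>y\<in>cube J. (G y - G (flip k y)) / 2 * walsh T y) = (\<Sum>y\<in>cube J. G y * walsh T y)"
    by (simp add: sum_subtractf sum_divide_distrib[symmetric] left_diff_distrib)
  then show ?thesis unfolding fourier_coeff_def by simp
qed

lemma abs_sum_cube_weighted_le:
  assumes T: "T \<subseteq> J" and w: "\<And>y. y \<in> cube J \<Longrightarrow> 0 \<le> w y"
    and G: "\<And>y. y \<in> cube J \<Longrightarrow> \<bar>G y\<bar> \<le> 1"
  shows "\<bar>\<Sum>y\<in>cube J. G y * walsh T y * w y\<bar> \<le> (\<Sum>y\<in>cube J. w y)"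
proof -
  have "\<bar>\<Sum>y\<in>cube J. G y * walsh T y * w y\<bar> \<le> (\<Sum>y\<in>cube J. \<bar>G y * walsh T y * w y\<bar>)"
    by (rule sum_abs)
  also have "\<dots> = (\<Sum>y\<in>cube J. \<bar>G y\<bar> * w y)"
    using abs_walsh[OF _ T] w by (intro sum.cong refl) (simp add: abs_mult)
  also have "\<dots> \<le> (\<Sum>y\<in>cube J. w y)"
    using G w by (intro sum_mono) (simp add: mult_left_le_one_le)
  finally show ?thesis .
qed

lemma abs_fourier_coeff_pair_le:
  assumes J: "finite J" and k: "k \<in> J" and S: "S \<subseteq> J" "k \<notin> S"
    and G: "\<And>y. y \<in> cube J \<Longrightarrow> \<bar>G y\<bar> \<le> 1"
  shows "\<bar>fourier_coeff J G S\<bar> + \<bar>fourier_coeff J G (insert k S)\<bar> \<le> 1"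
proof -
  have fS: "finite S" using J S finite_subset by blast
  have "\<bar>fourier_coeff J G S + s * fourier_coeff J G (insert k S)\<bar> \<le> 1" if s: "\<bar>s\<bar> = 1" for s
  proof -
    have "fourier_coeff J G S + s * fourier_coeff J G (insert k S)
        = (\<Sum>y\<in>cube J. G y * walsh S y * (1 + s * y k)) / 2 ^ card J"
      unfolding fourier_coeff_def walsh_insert[OF fS S(2)]
      by (simp add: sum.distrib sum_distrib_left algebra_simps add_divide_distrib)
    moreover have "(\<Sum>y\<in>cube J. 1 + s * y k) = 2 ^ card J"
      using sum_cube_coord[OF k] card_cube[OF J] by (simp add: sum.distrib flip: sum_distrib_left)
    moreover have "\<bar>\<Sum>y\<in>cube J. G y * walsh S y * (1 + s * y k)\<bar> \<le> (\<Sum>y\<in>cube J. 1 + s * y k)"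
    proof (rule abs_sum_cube_weighted_le[OF S(1) _ G])
      show "0 \<le> 1 + s * y k" if "y \<in> cube J" for y
        using cube_coord[OF that k] s by (auto simp: abs_if split: if_splits)
    qed
    ultimately show ?thesis by simp
  qed
  from this[of 1] this[of "-1"] show ?thesis by linarith
qed

section \<open>Restrictions of a boolean function\<close>

lemma restr_coeff_eq_fourier_coeff: "restr_coeff f J x T = fourier_coeff J (\<lambda>y. f (glue J y x)) T"
  unfolding restr_coeff_def fourier_coeff_def walsh_def by simp

lemma glue_in_cube:
  "V \<subseteq> {0..<n} \<Longrightarrow> y \<in> cube V \<Longrightarrow> x \<in> cube {0..<n} \<Longrightarrow> glue V y x \<in> cube {0..<n}"
  unfolding cube_def glue_def by (auto simp: PiE_iff extensional_def)

lemma glue_flip: "k \<in> V \<Longrightarrow> glue V (flip k y) x = flip k (glue V y x)"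
  unfolding glue_def flip_def by auto

lemma is_boolean_glue:
  "is_boolean n f \<Longrightarrow> V \<subseteq> {0..<n} \<Longrightarrow> x \<in> cube {0..<n} \<Longrightarrow> y \<in> cube V
    \<Longrightarrow> f (glue V y x) = -1 \<or> f (glue V y x) = 1"
  using glue_in_cube unfolding is_boolean_def by blast

text \<open>The map (x, y) \<mapsto> (glue V y x, x|V) is an involution of cube [n] \<times> cube V.\<close>

lemma sum_cube_sum_glue:
  fixes F :: "(nat \<Rightarrow> real) \<Rightarrow> real"
  assumes V: "V \<subseteq> {0..<n}"
  shows "(\<Sum>x\<in>cube {0..<n}. \<Sum>y\<in>cube V. F (glue V y x)) = 2 ^ card V * (\<Sum>z\<in>cube {0..<n}. F z)"
proof -
  let ?X = "cube {0..<n} \<times> cube V"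
  define \<sigma> where "\<sigma> = (\<lambda>(x, y). (glue V y x, restrict x V))"
  have \<sigma>: "\<sigma> (\<sigma> p) = p \<and> \<sigma> p \<in> ?X" if "p \<in> ?X" for p
  proof
    show "\<sigma> p \<in> ?X"
      using that glue_in_cube[OF V] subsetD[OF V] by (auto simp: \<sigma>_def cube_def)
    show "\<sigma> (\<sigma> p) = p"
      using that unfolding \<sigma>_def cube_def glue_def
      by (auto simp: PiE_iff extensional_def restrict_def fun_eq_iff)
  qed
  have "(\<Sum>x\<in>cube {0..<n}. \<Sum>y\<in>cube V. F (glue V y x)) = (\<Sum>p\<in>?X. F (fst (\<sigma> p)))"
    by (simp add: sum.cartesian_product \<sigma>_def case_prod_beta)
  also have "\<dots> = (\<Sum>p\<in>?X. F (fst p))"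
    using \<sigma> by (intro sum.reindex_bij_witness[of _ \<sigma> \<sigma>]) auto
  also have "\<dots> = (\<Sum>z\<in>cube {0..<n}. \<Sum>y\<in>cube V. F z)"
    by (subst sum.cartesian_product) (simp add: case_prod_beta)
  also have "\<dots> = real (card (cube V)) * (\<Sum>z\<in>cube {0..<n}. F z)"
    by (simp add: sum_distrib_left)
  finally show ?thesis
    using card_cube finite_subset[OF V] by simp
qed

lemma influence_eq_sum:
  "influence n f k = (\<Sum>z\<in>cube {0..<n}. if f z \<noteq> f (flip k z) then 1 else 0) / 2 ^ n"
  unfolding influence_def using finite_cube[of "{0..<n}"] by (simp add: sum.If_cases Int_def)

lemma influence_le_1: "influence n f k \<le> 1"
proof -
  have "(\<Sum>z\<in>cube {0..<n}. if f z \<noteq> f (flip k z) then 1 else 0) \<le> (\<Sum>z\<in>cube {0..<n}. 1::real)"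
    by (intro sum_mono) auto
  then show ?thesis
    using card_cube[of "{0..<n}"] by (simp add: influence_eq_sum)
qed

lemma sum_Pow_insert:
  assumes "finite V" "k \<notin> V"
  shows "(\<Sum>T\<in>Pow (insert k V). F T) = (\<Sum>S\<in>Pow V. F S + F (insert k S))"
proof -
  have "inj_on (insert k) (Pow V)"
    using assms by (auto simp: inj_on_def)
  then have "(\<Sum>T\<in>insert k ` Pow V. F T) = (\<Sum>S\<in>Pow V. F (insert k S))"
    by (simp add: sum.reindex)
  moreover have "(\<Sum>T\<in>Pow (insert k V). F T) = (\<Sum>T\<in>Pow V. F T) + (\<Sum>T\<in>insert k ` Pow V. F T)"
    unfolding Pow_insert using assms by (intro sum.union_disjoint) auto
  ultimately show ?thesis by (simp add: sum.distrib)
qed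

context
  fixes n :: nat and f :: "(nat \<Rightarrow> real) \<Rightarrow> real" and V :: "nat set" and k :: nat
  assumes boolean: "is_boolean n f" and V: "insert k V \<subseteq> {0..<n}" and k: "k \<notin> V"
begin

lemma finite_insert_V: "finite (insert k V)"
  using V by (rule finite_subset) simp

lemma abs_restr_coeff_pair_le:
  assumes "x \<in> cube {0..<n}" "S \<subseteq> V"
  shows "\<bar>restr_coeff f (insert k V) x S\<bar> + \<bar>restr_coeff f (insert k V) x (insert k S)\<bar> \<le> 1"
  unfolding restr_coeff_eq_fourier_coeff
proof (rule abs_fourier_coeff_pair_le[OF finite_insert_V insertI1])
  show "S \<subseteq> insert k V" "k \<notin> S"
    using assms(2) k by auto
  show "\<bar>f (glue (insert k V) y x)\<bar> \<le> 1" if "y \<in> cube (insert k V)" for y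
    using is_boolean_glue[OF boolean V assms(1) that] by auto
qed

lemma sum_restr_coeff_sq_eq_1:
  assumes x: "x \<in> cube {0..<n}"
  shows "(\<Sum>S\<in>Pow V. (restr_coeff f (insert k V) x S)\<^sup>2
                       + (restr_coeff f (insert k V) x (insert k S))\<^sup>2) = 1"
proof -
  let ?V = "insert k V"
  have "(\<Sum>y\<in>cube ?V. (f (glue ?V y x))\<^sup>2) = (\<Sum>y\<in>cube ?V. 1)"
  proof (intro sum.cong refl)
    fix y assume "y \<in> cube ?V"
    then show "(f (glue ?V y x))\<^sup>2 = 1"
      using is_boolean_glue[OF boolean V x] by fastforce
  qed
  then have "(\<Sum>T\<in>Pow ?V. (restr_coeff f ?V x T)\<^sup>2) = 1"
    using finite_insert_V card_cube
    by (simp add: restr_coeff_eq_fourier_coeff Parseval)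
  then show ?thesis
    using sum_Pow_insert[of V k "\<lambda>T. (restr_coeff f ?V x T)\<^sup>2"] finite_insert_V k by simp
qed

text \<open>The coefficients at S \<union> {k} are those of the k-th derivative of the restriction, whose
  square is the indicator that the k-th coordinate is pivotal.\<close>

lemma sum_restr_coeff_insert_sq_le:
  assumes x: "x \<in> cube {0..<n}"
  shows "(\<Sum>S\<in>Pow V. (restr_coeff f (insert k V) x (insert k S))\<^sup>2)
     \<le> (\<Sum>y\<in>cube (insert k V). if f (glue (insert k V) y x) \<noteq> f (flip k (glue (insert k V) y x))
                                 then 1 else 0) / 2 ^ card (insert k V)"
proof -
  let ?V = "insert k V"
  let ?g = "\<lambda>y. f (glue ?V y x)"
  let ?D = "\<lambda>y. (?g y - ?g (flip k y)) / 2"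
  have fV: "finite ?V" by (rule finite_insert_V)
  have "(\<Sum>S\<in>Pow V. (restr_coeff f ?V x (insert k S))\<^sup>2) = (\<Sum>S\<in>Pow V. (fourier_coeff ?V ?D (insert k S))\<^sup>2)"
    unfolding restr_coeff_eq_fourier_coeff
  proof (intro sum.cong refl)
    fix S assume "S \<in> Pow V"
    then have "insert k S \<subseteq> ?V" by auto
    then show "(fourier_coeff ?V ?g (insert k S))\<^sup>2 = (fourier_coeff ?V ?D (insert k S))\<^sup>2"
      using fourier_coeff_derivative[where G = ?g, OF fV _ insertI1] by simp
  qed
  also have "\<dots> \<le> (\<Sum>S\<in>Pow V. (fourier_coeff ?V ?D S)\<^sup>2 + (fourier_coeff ?V ?D (insert k S))\<^sup>2)"
    by (intro sum_mono) simp
  also have "\<dots> = (\<Sum>T\<in>Pow ?V. (fourier_coeff ?V ?D T)\<^sup>2)"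
    using sum_Pow_insert[of V k "\<lambda>T. (fourier_coeff ?V ?D T)\<^sup>2"] fV k by simp
  also have "\<dots> = (\<Sum>y\<in>cube ?V. (?D y)\<^sup>2) / 2 ^ card ?V"
    by (rule Parseval[OF fV])
  also have "(\<Sum>y\<in>cube ?V. (?D y)\<^sup>2)
      = (\<Sum>y\<in>cube ?V. if f (glue ?V y x) \<noteq> f (flip k (glue ?V y x)) then 1 else 0)"
  proof (intro sum.cong refl)
    fix y assume y: "y \<in> cube ?V"
    show "(?D y)\<^sup>2 = (if f (glue ?V y x) \<noteq> f (flip k (glue ?V y x)) then 1 else 0)"
      using is_boolean_glue[OF boolean V x y] is_boolean_glue[OF boolean V x flip_in_cube[OF insertI1 y]]
      by (auto simp: glue_flip power2_eq_square)
  qed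
  finally show ?thesis .
qed

lemma sum_max_restr_coeff_sq_le:
  "(\<Sum>x\<in>cube {0..<n}. \<Sum>S\<in>Pow V.
      max ((restr_coeff f (insert k V) x S)\<^sup>2) ((restr_coeff f (insert k V) x (insert k S))\<^sup>2)) \<le> 2 ^ n"
proof -
  have "(\<Sum>S\<in>Pow V. max ((restr_coeff f (insert k V) x S)\<^sup>2)
                        ((restr_coeff f (insert k V) x (insert k S))\<^sup>2)) \<le> 1"
    if x: "x \<in> cube {0..<n}" for x
  proof -
    have "(\<Sum>S\<in>Pow V. max ((restr_coeff f (insert k V) x S)\<^sup>2)
                          ((restr_coeff f (insert k V) x (insert k S))\<^sup>2))
        \<le> (\<Sum>S\<in>Pow V. (restr_coeff f (insert k V) x S)\<^sup>2
                       + (restr_coeff f (insert k V) x (insert k S))\<^sup>2)"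
      by (intro sum_mono) (simp add: max_def)
    then show ?thesis using sum_restr_coeff_sq_eq_1[OF x] by simp
  qed
  then have "(\<Sum>x\<in>cube {0..<n}. \<Sum>S\<in>Pow V.
      max ((restr_coeff f (insert k V) x S)\<^sup>2) ((restr_coeff f (insert k V) x (insert k S))\<^sup>2))
      \<le> (\<Sum>x\<in>cube {0..<n}. 1)"
    by (rule sum_mono)
  then show ?thesis using card_cube[of "{0..<n}"] by simp
qed

lemma sum_min_restr_coeff_sq_le:
  "(\<Sum>x\<in>cube {0..<n}. \<Sum>S\<in>Pow V.
      min ((restr_coeff f (insert k V) x S)\<^sup>2) ((restr_coeff f (insert k V) x (insert k S))\<^sup>2))
    \<le> 2 ^ n * influence n f k"
proof -
  let ?V = "insert k V"
  let ?P = "\<lambda>z. if f z \<noteq> f (flip k z) then 1 else 0 :: real"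
  have "(\<Sum>x\<in>cube {0..<n}. \<Sum>S\<in>Pow V.
      min ((restr_coeff f ?V x S)\<^sup>2) ((restr_coeff f ?V x (insert k S))\<^sup>2))
      \<le> (\<Sum>x\<in>cube {0..<n}. (\<Sum>y\<in>cube ?V. ?P (glue ?V y x)) / 2 ^ card ?V)"
  proof (rule sum_mono)
    fix x assume x: "x \<in> cube {0..<n}"
    have "(\<Sum>S\<in>Pow V. min ((restr_coeff f ?V x S)\<^sup>2) ((restr_coeff f ?V x (insert k S))\<^sup>2))
        \<le> (\<Sum>S\<in>Pow V. (restr_coeff f ?V x (insert k S))\<^sup>2)"
      by (intro sum_mono) simp
    also have "\<dots> \<le> (\<Sum>y\<in>cube ?V. ?P (glue ?V y x)) / 2 ^ card ?V"
      by (rule sum_restr_coeff_insert_sq_le[OF x])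
    finally show "(\<Sum>S\<in>Pow V. min ((restr_coeff f ?V x S)\<^sup>2) ((restr_coeff f ?V x (insert k S))\<^sup>2))
        \<le> (\<Sum>y\<in>cube ?V. ?P (glue ?V y x)) / 2 ^ card ?V" .
  qed
  also have "\<dots> = (\<Sum>x\<in>cube {0..<n}. \<Sum>y\<in>cube ?V. ?P (glue ?V y x)) / 2 ^ card ?V"
    by (rule sum_divide_distrib[symmetric])
  also have "\<dots> = (\<Sum>z\<in>cube {0..<n}. ?P z)"
    unfolding sum_cube_sum_glue[OF V, of ?P] by simp
  finally show ?thesis by (simp add: influence_eq_sum)
qed

end

theorem mainTheorem8:
  fixes n :: nat and f :: "(nat \<Rightarrow> real) \<Rightarrow> real" and V1 :: "nat set"
    and k :: nat and eps :: real
  assumes "is_boolean n f"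
    and "V1 \<subset> {0..<n}"
    and "k \<in> {0..<n} - V1"
    and "0 < eps" and "eps < 1/2"
    and "influence n f k > 0"
  shows "(\<Sum>x\<in>cube {0..<n}. \<Sum>S\<in>Pow V1.
            (let V2 = insert k V1;
                 c0 = (restr_coeff f V2 x S)\<^sup>2;
                 c1 = (restr_coeff f V2 x (insert k S))\<^sup>2;
                 a = min c0 c1; b = max c0 c1
             in (b powr eps - a powr eps) * a)) / 2 ^ n
         \<le> influence n f k * ((influence n f k / 4) powr (- eps) - 1)"
proof -
  let ?X = "cube {0..<n} \<times> Pow V1" and ?I = "influence n f k"
  define c where "c x T = (restr_coeff f (insert k V1) x T)\<^sup>2" for x T
  define a where "a = (\<lambda>(x, S). min (c x S) (c x (insert k S)))"
  define b where "b = (\<lambda>(x, S). max (c x S) (c x (insert k S)))"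
  have V: "insert k V1 \<subseteq> {0..<n}" and k: "k \<notin> V1"
    using assms(2,3) by auto
  have "finite ?X"
    using finite_cube finite_subset[OF _ finite_atLeastLessThan, of V1 0 n] assms(2) by auto
  then have "(\<Sum>p\<in>?X. (b p powr eps - a p powr eps) * a p) \<le> 2 ^ n * (?I * ((?I/4) powr (-eps) - 1))"
  proof (rule sum_powr_gap_le)
    show "0 \<le> a p \<and> a p \<le> b p \<and> a p \<le> 1/4" if "p \<in> ?X" for p
      using that abs_restr_coeff_pair_le[OF assms(1) V k] min_sq_le_quarter
      by (auto simp: a_def b_def c_def)
    show "(\<Sum>p\<in>?X. b p) \<le> 2 ^ n"
      using sum_max_restr_coeff_sq_le[OF assms(1) V k] by (simp add: b_def c_def sum.cartesian_product)
    show "(\<Sum>p\<in>?X. a p) \<le> 2 ^ n * ?I"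
      using sum_min_restr_coeff_sq_le[OF assms(1) V k] by (simp add: a_def c_def sum.cartesian_product)
  qed (use assms influence_le_1 in auto)
  then show ?thesis
    by (simp add: Let_def a_def b_def c_def sum.cartesian_product split_def pos_divide_le_eq mult.commute)
qed

end
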